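(* Let $\lambda=(n_1,n_2)$ be a two-row shape with $n_1\ge n_2\ge 2$, and let $\rho$ be a density on $\lambda$ with positive entries $\rho_{1,j}=a_j$ ($1\le j\le n_1$) and $\rho_{2,j}=b_j$ ($1\le j\le n_2$). Let $\lambda'=(n_1-1,n_2-1)$ and, for $0\le i\le b_1$, let $\rho'_i$ be the density on $\lambda'$ with first row $(a_2,a_3,\dots,a_{n_1})$ and second row $(b_1+b_2-i,\,b_3,\dots,b_{n_2})$. Then $$|\mathrm{SVT}(\lambda,\rho)|=\sum_{i=0}^{b_1}\binom{a_2+i-1}{i}\,|\mathrm{SVT}(\lambda',\rho'_i)|.$$
   Context: A density on a shape $\lambda$ is an assignment of a nonnegative integer $\rho_{i,j}$ to every cell $(i,j)$ (row $i$, column $j$); let $N=\sum\rho_{i,j}$. A standard set-valued Young tableau of shape $\lambda$ and density $\rho$ assigns to each cell $(i,j)$ a set $S_{i,j}$ with $|S_{i,j}|=\rho_{i,j}$, the sets partitioning $[N]$, such that every element of $S_{i,j}$ is smaller than every element of $S_{i,j+1}$ and of $S_{i+1,j}$ whenever those cells exist. $\mathrm{SVT}(\lambda,\rho)$ is the set of these tableaux. *)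

theory Defs
  imports Main
begin

definition cells :: "nat list \<Rightarrow> (nat \<times> nat) set" where
  "cells lam = {(i, j). 1 \<le> i \<and> i \<le> length lam \<and> 1 \<le> j \<and> j \<le> lam ! (i - 1)}"

text \<open>A density is a function rho on cells (values outside cells are ignored).\<close>
definition SVT :: "nat list \<Rightarrow> (nat \<times> nat \<Rightarrow> nat) \<Rightarrow> (nat \<times> nat \<Rightarrow> nat set) set" where
  "SVT lam rho = {S.
     (\<forall>c. c \<notin> cells lam \<longrightarrow> S c = {}) \<and>
     (\<forall>c\<in>cells lam. finite (S c) \<and> card (S c) = rho c) \<and>
     (\<forall>c\<in>cells lam. \<forall>d\<in>cells lam. c \<noteq> d \<longrightarrow> S c \<inter> S d = {}) \<and>
     (\<Union>c\<in>cells lam. S c) = {1..(\<Sum>c\<in>cells lam. rho c)} \<and>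
     (\<forall>i j. (i, j) \<in> cells lam \<longrightarrow>
        (\<forall>x\<in>S (i, j).
           ((i, j + 1) \<in> cells lam \<longrightarrow> (\<forall>y\<in>S (i, j + 1). x < y)) \<and>
           ((i + 1, j) \<in> cells lam \<longrightarrow> (\<forall>y\<in>S (i + 1, j). x < y))))}"

end

theory Submission
  imports Defs
begin

text \<open>Listing, for \<open>k = 1, \<dots>, N\<close>, the cell whose set contains \<open>k\<close> turns a tableau of
  \<open>SVT(\<lambda>, \<rho>)\<close> into a word in which every cell \<open>c\<close> occurs \<open>\<rho> c\<close> times and no cell
  occurs after a cell to its right or below it; this is a bijection. In such a word for a two-row
  shape with positive density, the \<open>a\<^sub>1\<close> letters \<open>(1, 1)\<close> come first. They are followed by
  the \<open>a\<^sub>2\<close> letters \<open>(1, 2)\<close> interleaved with some \<open>i \<le> b\<^sub>1\<close> letters \<open>(2, 1)\<close>, ending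
  with \<open>(1, 2)\<close>: there are \<open>a\<^sub>2 + i - 1 choose i\<close> such segments. Shifting every
  remaining letter one column to the left merges the other \<open>b\<^sub>1 - i\<close> letters \<open>(2, 1)\<close> with the
  \<open>b\<^sub>2\<close> letters \<open>(2, 2)\<close>; prefixed with \<open>a\<^sub>2\<close> letters \<open>(1, 1)\<close> this is a word for
  \<open>(\<lambda>', \<rho>'\<^sub>i)\<close>, and it determines the rest of the original word, since there all
  \<open>(2, 1)\<close> precede all \<open>(2, 2)\<close>.\<close>

section \<open>Set-valued tableaux as words\<close>

definition covers :: "nat \<times> nat \<Rightarrow> nat \<times> nat \<Rightarrow> bool" where
  "covers c d \<longleftrightarrow> (fst d = fst c \<and> snd d = Suc (snd c)) \<or> (fst d = Suc (fst c) \<and> snd d = snd c)"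

fun before :: "'a \<Rightarrow> 'a \<Rightarrow> 'a list \<Rightarrow> bool" where
  "before c d [] = True"
| "before c d (x # xs) = ((x = d \<longrightarrow> c \<notin> set xs) \<and> before c d xs)"

definition tableau_words :: "nat list \<Rightarrow> (nat \<times> nat \<Rightarrow> nat) \<Rightarrow> (nat \<times> nat) list set" where
  "tableau_words lam rho = {w. set w \<subseteq> cells lam \<and> (\<forall>c\<in>cells lam. count_list w c = rho c)
      \<and> (\<forall>c d. covers c d \<longrightarrow> before c d w)}"

definition word_tableau :: "(nat \<times> nat) list \<Rightarrow> nat \<times> nat \<Rightarrow> nat set" where
  "word_tableau w c = {k \<in> {1..length w}. w ! (k - 1) = c}"

lemma before_append:
  "before c d (xs @ ys) \<longleftrightarrow> before c d xs \<and> before c d ys \<and> (d \<in> set xs \<longrightarrow> c \<notin> set ys)"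
  by (induction xs) auto

lemma before_if_notin_left: "c \<notin> set xs \<Longrightarrow> before c d xs"
  by (induction xs) auto

lemma before_if_notin_right: "d \<notin> set xs \<Longrightarrow> before c d xs"
  by (induction xs) auto

lemma before_replicate: "c \<noteq> d \<Longrightarrow> before c d (replicate n e)"
  by (induction n) auto

lemma before_trans: "before c d w \<Longrightarrow> before d e w \<Longrightarrow> d \<in> set w \<Longrightarrow> before c e w"
  by (induction w) (auto simp: before_if_notin_left)

lemma before_iff_nth:
  assumes "c \<noteq> d"
  shows "before c d w \<longleftrightarrow> (\<forall>p<length w. \<forall>q<length w. w ! p = c \<longrightarrow> w ! q = d \<longrightarrow> p < q)"
proof (induction w)
  case (Cons x xs)
  have "before c d (x # xs) \<longleftrightarrow> (x = d \<longrightarrow> c \<notin> set xs) \<and> before c d xs" by simp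
  also have "\<dots> \<longleftrightarrow> (\<forall>p<length (x # xs). \<forall>q<length (x # xs).
      (x # xs) ! p = c \<longrightarrow> (x # xs) ! q = d \<longrightarrow> p < q)"
    unfolding Cons.IH using assms
    by (auto simp: All_less_Suc2 in_set_conv_nth)
  finally show ?case .
qed simp

lemma before_map: "before (f c) (f d) (map f v) \<Longrightarrow> before c d v"
  by (induction v) auto

lemma before_map_if_before:
  "\<forall>c\<in>set v. \<forall>d\<in>set v. f c = c' \<longrightarrow> f d = d' \<longrightarrow> before c d v \<Longrightarrow> before c' d' (map f v)"
  by (induction v) (fastforce simp: before_if_notin_left)+

lemma finite_cells: "finite (cells lam)"
proof -
  have "cells lam \<subseteq> {..length lam} \<times> {..sum_list lam}"
  proof
    fix c assume "c \<in> cells lam"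
    then obtain i j where c: "c = (i, j)" "1 \<le> i" "i \<le> length lam" "j \<le> lam ! (i - 1)"
      unfolding cells_def by auto
    then have "lam ! (i - 1) \<le> sum_list lam" by (intro member_le_sum_list) auto
    then show "c \<in> {..length lam} \<times> {..sum_list lam}" using c by auto
  qed
  then show ?thesis by (rule finite_subset) auto
qed

lemma count_list_eq_card_word_tableau: "count_list w c = card (word_tableau w c)"
proof -
  have "count_list w c = card {p. p < length w \<and> c = w ! p}"
    by (simp add: count_list_eq_length_filter length_filter_conv_card)
  also have "\<dots> = card (Suc ` {p. p < length w \<and> c = w ! p})" by (simp add: card_image)
  also have "Suc ` {p. p < length w \<and> c = w ! p} = word_tableau w c"
  proof (rule set_eqI)
    fix k
    show "k \<in> Suc ` {p. p < length w \<and> c = w ! p} \<longleftrightarrow> k \<in> word_tableau w c"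
      unfolding word_tableau_def by (cases k) auto
  qed
  finally show ?thesis .
qed

lemma length_tableau_word: "w \<in> tableau_words lam rho \<Longrightarrow> length w = (\<Sum>c\<in>cells lam. rho c)"
  unfolding tableau_words_def using sum_count_set[of w "cells lam", OF _ finite_cells] by auto

lemma finite_tableau_words: "finite (tableau_words lam rho)"
proof (rule finite_subset)
  show "tableau_words lam rho \<subseteq> {w. set w \<subseteq> cells lam \<and> length w = (\<Sum>c\<in>cells lam. rho c)}"
    using length_tableau_word unfolding tableau_words_def by blast
qed (use finite_lists_length_eq[OF finite_cells] in blast)

lemma word_tableau_less:
  assumes "covers c d" "before c d w" "x \<in> word_tableau w c" "y \<in> word_tableau w d"
  shows "x < y"
proof -
  have "c \<noteq> d" using assms(1) unfolding covers_def by auto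
  then have "x - 1 < y - 1"
    using assms(2-4) unfolding before_iff_nth[OF \<open>c \<noteq> d\<close>] word_tableau_def by auto
  then show "x < y" by simp
qed

lemma word_tableau_in_SVT:
  assumes w: "w \<in> tableau_words lam rho"
  shows "word_tableau w \<in> SVT lam rho"
proof -
  have sub: "set w \<subseteq> cells lam" and cnt: "\<forall>c\<in>cells lam. count_list w c = rho c"
    and ord: "\<forall>c d. covers c d \<longrightarrow> before c d w"
    using w unfolding tableau_words_def by auto
  have nth_cell: "w ! (k - 1) \<in> cells lam" if "k \<in> {1..length w}" for k
    using that sub by (auto intro: nth_mem)
  have outside: "\<forall>c. c \<notin> cells lam \<longrightarrow> word_tableau w c = {}"
    unfolding word_tableau_def using nth_cell by blast
  have card: "\<forall>c\<in>cells lam. finite (word_tableau w c) \<and> card (word_tableau w c) = rho c"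
    using cnt count_list_eq_card_word_tableau unfolding word_tableau_def by fastforce
  have disjoint: "\<forall>c\<in>cells lam. \<forall>d\<in>cells lam. c \<noteq> d \<longrightarrow> word_tableau w c \<inter> word_tableau w d = {}"
    unfolding word_tableau_def by auto
  have "(\<Union>c\<in>cells lam. word_tableau w c) = {1..length w}"
  proof
    show "(\<Union>c\<in>cells lam. word_tableau w c) \<subseteq> {1..length w}"
      unfolding word_tableau_def by auto
    show "{1..length w} \<subseteq> (\<Union>c\<in>cells lam. word_tableau w c)"
    proof
      fix k assume k: "k \<in> {1..length w}"
      with nth_cell[OF k] show "k \<in> (\<Union>c\<in>cells lam. word_tableau w c)" unfolding word_tableau_def by auto
    qed
  qed
  then have union: "(\<Union>c\<in>cells lam. word_tableau w c) = {1..(\<Sum>c\<in>cells lam. rho c)}"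
    using length_tableau_word[OF w] by simp
  have "covers (i, j) (i, j + 1)" "covers (i, j) (i + 1, j)" for i j
    by (simp_all add: covers_def)
  then have increasing: "\<forall>i j. (i, j) \<in> cells lam \<longrightarrow> (\<forall>x\<in>word_tableau w (i, j).
      ((i, j + 1) \<in> cells lam \<longrightarrow> (\<forall>y\<in>word_tableau w (i, j + 1). x < y)) \<and>
      ((i + 1, j) \<in> cells lam \<longrightarrow> (\<forall>y\<in>word_tableau w (i + 1, j). x < y)))"
    using ord word_tableau_less by blast
  show ?thesis
    unfolding SVT_def using outside card disjoint union increasing by blast
qed

lemma inj_on_word_tableau: "inj_on word_tableau (tableau_words lam rho)"
proof
  fix w v assume w: "w \<in> tableau_words lam rho" and v: "v \<in> tableau_words lam rho"
    and eq: "word_tableau w = word_tableau v"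
  have length: "length w = length v"
    using length_tableau_word[OF w] length_tableau_word[OF v] by simp
  then show "w = v"
  proof (rule nth_equalityI)
    fix p assume "p < length w"
    then have "Suc p \<in> word_tableau w (w ! p)" unfolding word_tableau_def by simp
    then have "Suc p \<in> word_tableau v (w ! p)" by (simp add: eq)
    then show "w ! p = v ! p" unfolding word_tableau_def by auto
  qed
qed

lemma SVT_ex1_cell:
  assumes "S \<in> SVT lam rho" "k \<in> {1..(\<Sum>c\<in>cells lam. rho c)}"
  shows "\<exists>!c. c \<in> cells lam \<and> k \<in> S c"
proof -
  have "k \<in> (\<Union>c\<in>cells lam. S c)"
    and "\<forall>c\<in>cells lam. \<forall>d\<in>cells lam. c \<noteq> d \<longrightarrow> S c \<inter> S d = {}"
    using assms unfolding SVT_def by auto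
  then show ?thesis by blast
qed

lemma SVT_obtain_word:
  assumes S: "S \<in> SVT lam rho"
  obtains w where "set w \<subseteq> cells lam" "word_tableau w = S"
proof -
  define N where "N = (\<Sum>c\<in>cells lam. rho c)"
  have outside: "\<And>c. c \<notin> cells lam \<Longrightarrow> S c = {}" and union: "(\<Union>c\<in>cells lam. S c) = {1..N}"
    using S unfolding SVT_def N_def by auto
  define cell_of where "cell_of k = (THE c. c \<in> cells lam \<and> k \<in> S c)" for k
  have cell_of: "c = cell_of k \<longleftrightarrow> k \<in> S c" if "k \<in> {1..N}" for c k
  proof -
    note ex1 = SVT_ex1_cell[OF S that[unfolded N_def]]
    have "cell_of k \<in> cells lam \<and> k \<in> S (cell_of k)"
      unfolding cell_of_def by (rule theI'[OF ex1])
    then show ?thesis using ex1 outside by blast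
  qed
  define w where "w = map cell_of [1..<Suc N]"
  have length_w: "length w = N" unfolding w_def by simp
  have nth_w: "w ! (k - 1) = cell_of k" if "k \<in> {1..N}" for k
    using that unfolding w_def by (auto simp del: upt_Suc)
  have "word_tableau w = S"
  proof (intro ext set_eqI)
    fix c k
    have "k \<in> word_tableau w c \<longleftrightarrow> k \<in> {1..N} \<and> c = cell_of k"
      unfolding word_tableau_def using nth_w length_w by auto
    also have "\<dots> \<longleftrightarrow> k \<in> S c"
      using cell_of union outside by blast
    finally show "k \<in> word_tableau w c \<longleftrightarrow> k \<in> S c" .
  qed
  moreover have "set w \<subseteq> cells lam"
  proof
    fix c assume "c \<in> set w"
    then have "\<exists>k\<in>{1..N}. c = cell_of k" unfolding w_def by (auto simp del: upt_Suc)
    then obtain k where "k \<in> {1..N}" "c = cell_of k" by blast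
    then have "k \<in> S c" using cell_of by blast
    then show "c \<in> cells lam" using outside by blast
  qed
  ultimately show ?thesis using that by blast
qed

lemma before_if_word_tableau_in_SVT:
  assumes S: "word_tableau w \<in> SVT lam rho" and w: "set w \<subseteq> cells lam" and covers: "covers c d"
  shows "before c d w"
proof -
  have increasing: "\<And>i j x y. (i, j) \<in> cells lam \<Longrightarrow> x \<in> word_tableau w (i, j) \<Longrightarrow>
      ((i, j + 1) \<in> cells lam \<longrightarrow> y \<in> word_tableau w (i, j + 1) \<longrightarrow> x < y) \<and>
      ((i + 1, j) \<in> cells lam \<longrightarrow> y \<in> word_tableau w (i + 1, j) \<longrightarrow> x < y)"
    using S unfolding SVT_def by blast
  have "c \<noteq> d" using covers unfolding covers_def by auto
  moreover have "Suc p < Suc q" if "p < length w" "q < length w" "w ! p = c" "w ! q = d" for p q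
  proof -
    have "Suc p \<in> word_tableau w c" "Suc q \<in> word_tableau w d" "c \<in> cells lam" "d \<in> cells lam"
      using that w unfolding word_tableau_def by (auto dest: nth_mem)
    then show ?thesis
      using covers increasing[of "fst c" "snd c" "Suc p" "Suc q"] unfolding covers_def
      by (cases c; cases d) auto
  qed
  ultimately show ?thesis unfolding before_iff_nth[OF \<open>c \<noteq> d\<close>] by simp
qed

lemma word_tableau_surj:
  assumes S: "S \<in> SVT lam rho"
  shows "\<exists>w\<in>tableau_words lam rho. word_tableau w = S"
proof -
  obtain w where w: "set w \<subseteq> cells lam" and tableau: "word_tableau w = S"
    using SVT_obtain_word[OF S] .
  have "\<forall>c\<in>cells lam. count_list w c = rho c"
    using S tableau count_list_eq_card_word_tableau unfolding SVT_def by auto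
  moreover have "before c d w" if "covers c d" for c d
    using before_if_word_tableau_in_SVT[OF _ w that] S tableau by simp
  ultimately show ?thesis using w tableau unfolding tableau_words_def by blast
qed

lemma card_SVT_eq_card_tableau_words: "card (SVT lam rho) = card (tableau_words lam rho)"
proof -
  have "bij_betw word_tableau (tableau_words lam rho) (SVT lam rho)"
    unfolding bij_betw_def using inj_on_word_tableau word_tableau_in_SVT word_tableau_surj by blast
  then show ?thesis by (simp add: bij_betw_same_card)
qed

lemma count_list_replicate: "count_list (replicate n x) y = (if x = y then n else 0)"
  by (induction n) auto

lemma count_list_two_letters:
  "set u \<subseteq> {x, y} \<Longrightarrow> x \<noteq> y \<Longrightarrow> count_list u x + count_list u y = length u"
  by (induction u) auto

lemma card_two_letter_words:
  assumes "x \<noteq> y"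
  shows "card {v. length v = n \<and> set v \<subseteq> {x, y} \<and> count_list v y = k} = n choose k"
proof (induction n arbitrary: k)
  case 0
  have "{v. length v = 0 \<and> set v \<subseteq> {x, y} \<and> count_list v y = k} = (if k = 0 then {[]} else {})"
    by auto
  then show ?case by simp
next
  case (Suc n)
  define L where "L n k = {v. length v = n \<and> set v \<subseteq> {x, y} \<and> count_list v y = k}" for n k
  have finite: "finite (L n k)" for n k
    by (rule finite_subset[OF _ finite_lists_length_eq[of "{x, y}" n]]) (auto simp: L_def)
  have "L (Suc n) k = Cons x ` L n k \<union> (if k = 0 then {} else Cons y ` L n (k - 1))"
    using assms by (auto simp: L_def length_Suc_conv split: if_splits)
  moreover have "Cons x ` L n k \<inter> Cons y ` L n (k - 1) = {}" using assms by auto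
  ultimately have "card (L (Suc n) k) = card (L n k) + (if k = 0 then 0 else card (L n (k - 1)))"
    using finite by (simp add: card_Un_disjoint card_image)
  then show ?case using Suc.IH unfolding L_def by (cases k) simp_all
qed

lemma block_at_front:
  "\<forall>d\<in>set w. d \<noteq> c \<longrightarrow> before c d w \<Longrightarrow> w = replicate (count_list w c) c @ filter (\<lambda>x. x \<noteq> c) w"
  by (induction w) (auto simp: filter_id_conv)

lemma append_eq_append_last_unique:
  assumes "u @ v = u' @ v'" "u \<noteq> []" "u' \<noteq> []" "last u = x" "last u' = x" "x \<notin> set v" "x \<notin> set v'"
  shows "u = u'"
proof -
  obtain us where "(u = u' @ us \<and> us @ v = v') \<or> (u @ us = u' \<and> v = us @ v')"
    using assms(1) by (auto simp: append_eq_append_conv2)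
  then show ?thesis
  proof
    assume split: "u = u' @ us \<and> us @ v = v'"
    show ?thesis
    proof (cases "us = []")
      case False
      then have "last u \<in> set us" using split by simp
      then show ?thesis using split assms by auto
    qed (use split in simp)
  next
    assume split: "u @ us = u' \<and> v = us @ v'"
    show ?thesis
    proof (cases "us = []")
      case False
      then have "last u' \<in> set us" using split by auto
      then show ?thesis using split assms by auto
    qed (use split in simp)
  qed
qed

section \<open>Words of two-row shapes\<close>

lemma cells_two_rows:
  "(r, j) \<in> cells [m1, m2] \<longleftrightarrow> 1 \<le> j \<and> ((r = 1 \<and> j \<le> m1) \<or> (r = 2 \<and> j \<le> m2))"
  unfolding cells_def by (auto simp: numeral_2_eq_2 le_Suc_eq nth_Cons split: nat.splits)

lemma cell_in_tableau_word:
  assumes "w \<in> tableau_words lam rho" "c \<in> cells lam" "0 < rho c"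
  shows "c \<in> set w"
proof -
  have "count_list w c = rho c" using assms(1,2) by (simp add: tableau_words_def)
  with assms(3) show ?thesis by (metis count_notin less_irrefl)
qed

lemma before_if_covers: "w \<in> tableau_words lam rho \<Longrightarrow> covers c d \<Longrightarrow> before c d w"
  unfolding tableau_words_def by (simp del: split_paired_All)

lemma before_in_row:
  assumes w: "w \<in> tableau_words lam rho" and positive: "\<forall>c\<in>cells lam. 0 < rho c"
  shows "(r, j) \<in> cells lam \<Longrightarrow> 1 \<le> k \<Longrightarrow> k < j \<Longrightarrow> before (r, k) (r, j) w"
proof (induction j)
  case (Suc j)
  have "before (r, j) (r, Suc j) w" using before_if_covers[OF w] by (simp add: covers_def)
  moreover have "(r, j) \<in> cells lam" using Suc.prems unfolding cells_def by auto
  ultimately show ?case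
    using Suc cell_in_tableau_word[OF w] positive by (cases "k = j") (auto intro: before_trans)
qed simp

lemma before_if_le_two_rows:
  assumes w: "w \<in> tableau_words [m1, m2] rho" and positive: "\<forall>c\<in>cells [m1, m2]. 0 < rho c"
    and cells: "(r, j) \<in> cells [m1, m2]" "(r', j') \<in> cells [m1, m2]"
    and le: "(r, j) \<noteq> (r', j')" "r \<le> r'" "j \<le> j'"
  shows "before (r, j) (r', j') w"
proof (cases "r = r'")
  case True
  then show ?thesis using before_in_row[OF w positive] cells le by (auto simp: cells_two_rows)
next
  case False
  then have rows: "r = 1" "r' = 2" using cells le by (auto simp: cells_two_rows)
  have "before (1, j) (2, j) w" using before_if_covers[OF w] by (simp add: covers_def)
  moreover have "before (2, j) (2, j') w" if "j < j'"
    using before_in_row[OF w positive] cells rows that by (auto simp: cells_two_rows)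
  moreover have "(2, j) \<in> set w"
    using cell_in_tableau_word[OF w] positive cells rows le by (auto simp: cells_two_rows)
  ultimately show ?thesis using rows le by (cases "j = j'") (auto intro: before_trans)
qed

lemma tableau_word_first_block:
  assumes w: "w \<in> tableau_words [m1, m2] rho" and positive: "\<forall>c\<in>cells [m1, m2]. 0 < rho c"
    and "1 \<le> m1"
  shows "w = replicate (rho (1, 1)) (1, 1) @ drop (rho (1, 1)) w"
    and "(1, 1) \<notin> set (drop (rho (1, 1)) w)"
proof -
  have cell: "(1, 1) \<in> cells [m1, m2]" using \<open>1 \<le> m1\<close> by (simp add: cells_two_rows)
  have "set w \<subseteq> cells [m1, m2]" using w unfolding tableau_words_def by auto
  have "before (1, 1) d w" if "d \<in> set w" "d \<noteq> (1, 1)" for d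
  proof -
    obtain r j where d: "d = (r, j)" by (cases d)
    have "(r, j) \<in> cells [m1, m2]" using that \<open>set w \<subseteq> cells [m1, m2]\<close> d by auto
    then show ?thesis
      using before_if_le_two_rows[OF w positive cell, of r j] that d by (auto simp: cells_two_rows)
  qed
  then have "w = replicate (count_list w (1, 1)) (1, 1) @ filter (\<lambda>x. x \<noteq> (1, 1)) w"
    by (intro block_at_front) blast
  moreover have "count_list w (1, 1) = rho (1, 1)" using w cell unfolding tableau_words_def by auto
  ultimately have w_eq: "w = replicate (rho (1, 1)) (1, 1) @ filter (\<lambda>x. x \<noteq> (1, 1)) w"
    by simp
  then have "drop (rho (1, 1)) w = filter (\<lambda>x. x \<noteq> (1, 1)) w"
    by (metis append_eq_conv_conj length_replicate)
  then show "w = replicate (rho (1, 1)) (1, 1) @ drop (rho (1, 1)) w"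
    and "(1, 1) \<notin> set (drop (rho (1, 1)) w)"
    using w_eq by auto
qed

section \<open>Shifting cells one column to the left\<close>

text \<open>\<open>shift_cell\<close> moves a cell one column to the left, except that the first column stays
  in place; so \<open>(1, 2)\<close> joins \<open>(1, 1)\<close> and \<open>(2, 2)\<close> joins \<open>(2, 1)\<close>. On words,
  \<open>unshift k\<close> undoes it: the first \<open>k\<close> letters \<open>(2, 1)\<close> stay, the later ones become \<open>(2, 2)\<close>.\<close>

definition shift_cell :: "nat \<times> nat \<Rightarrow> nat \<times> nat" where
  "shift_cell c = (fst c, max 1 (snd c - 1))"

fun unshift :: "nat \<Rightarrow> (nat \<times> nat) list \<Rightarrow> (nat \<times> nat) list" where
  "unshift k [] = []"
| "unshift k (c # cs) =
    (if c = (2, 1) then (if 0 < k then (2, 1) # unshift (k - 1) cs else (2, 2) # unshift 0 cs)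
     else (fst c, Suc (snd c)) # unshift k cs)"

lemma shift_cell_ge2: "2 \<le> snd c \<Longrightarrow> shift_cell c = (fst c, snd c - 1)"
  by (simp add: shift_cell_def max_def)

text \<open>The simplifier normalises the cell \<open>(2, 1)\<close> to \<open>(2, Suc 0)\<close> in most goals, hence
  the form of the next two rewrite rules.\<close>

lemma shift_cell_21 [simp]: "shift_cell (2, Suc 0) = (2, Suc 0)"
  by (simp add: shift_cell_def)

lemma unshift_Cons_21 [simp]:
  "unshift k ((2, Suc 0) # cs) = (if 0 < k then (2, Suc 0) # unshift (k - 1) cs else (2, 2) # unshift 0 cs)"
  by simp

lemma unshift_Cons_other: "c \<noteq> (2, 1) \<Longrightarrow> unshift k (c # cs) = (fst c, Suc (snd c)) # unshift k cs"
  by simp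

declare unshift.simps(2) [simp del]

lemma map_shift_cell_unshift: "\<forall>c\<in>set v. 1 \<le> snd c \<Longrightarrow> map shift_cell (unshift k v) = v"
proof (induction v arbitrary: k)
  case (Cons c cs)
  then show ?case by (cases "c = (2, 1)") (auto simp: unshift_Cons_other shift_cell_def)
qed simp

lemma unshift_map_shift_cell:
  "\<forall>c\<in>set v. c = (2, 1) \<or> 2 \<le> snd c \<Longrightarrow> before (2, 1) (2, 2) v \<Longrightarrow>
    unshift (count_list v (2, 1)) (map shift_cell v) = v"
proof (induction v)
  case (Cons c cs)
  show ?case
  proof (cases "c = (2, 1) \<or> c = (2, 2)")
    case True
    then show ?thesis using Cons by (auto simp: shift_cell_def)
  next
    case False
    then have "shift_cell c \<noteq> (2, 1)" "(fst (shift_cell c), Suc (snd (shift_cell c))) = c"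
      using Cons.prems by (auto simp: shift_cell_ge2 prod_eq_iff)
    then show ?thesis using Cons False by (simp add: unshift_Cons_other)
  qed
qed simp

lemma count_list_unshift:
  "\<forall>c\<in>set v. 1 \<le> snd c \<Longrightarrow> k \<le> count_list v (2, 1) \<Longrightarrow> count_list (unshift k v) (2, 1) = k"
proof (induction v arbitrary: k)
  case (Cons c cs)
  then show ?case by (cases "c = (2, 1)") (auto simp: unshift_Cons_other)
qed simp

lemma unshift_0_notin: "\<forall>c\<in>set v. 1 \<le> snd c \<Longrightarrow> (2, 1) \<notin> set (unshift 0 v)"
proof (induction v)
  case (Cons c cs)
  then show ?case by (cases "c = (2, 1)") (auto simp: unshift_Cons_other)
qed simp

lemma before_unshift: "\<forall>c\<in>set v. 1 \<le> snd c \<Longrightarrow> before (2, 1) (2, 2) (unshift k v)"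
proof (induction v arbitrary: k)
  case (Cons c cs)
  show ?case
  proof (cases "c = (2, 1)")
    case True
    then show ?thesis using Cons unshift_0_notin[of cs] by auto
  next
    case False
    then have "(fst c, Suc (snd c)) \<noteq> (2, 2)" by (cases c) auto
    then show ?thesis using Cons False by (auto simp: unshift_Cons_other)
  qed
qed simp

lemma set_unshift:
  "c \<in> set (unshift k v) \<Longrightarrow>
    c = (2, 1) \<or> c = (2, 2) \<or> (\<exists>c'\<in>set v. c' \<noteq> (2, 1) \<and> c = (fst c', Suc (snd c')))"
proof (induction v arbitrary: k)
  case (Cons c' cs)
  then show ?case by (cases "c' = (2, 1)") (auto simp: unshift_Cons_other split: if_splits)
qed simp

lemma count_list_map_shift_cell:
  assumes "\<forall>c\<in>set v. c = (2, 1) \<or> 2 \<le> snd c" "1 \<le> snd c'"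
  shows "count_list (map shift_cell v) c' = (if c' = (2, 1) then count_list v (2, 1) + count_list v (2, 2)
    else count_list v (fst c', Suc (snd c')))"
  using assms
proof (induction v)
  case (Cons c cs)
  then show ?case by (cases c; cases c') (auto simp: shift_cell_def)
qed simp

lemma cells_not_first_two:
  "c \<in> cells [m1, m2] - {(1, 1), (1, 2)} \<Longrightarrow> c = (2, 1) \<or> 2 \<le> snd c"
  by (cases c) (auto simp: cells_two_rows)

lemma shift_cell_mem_cells:
  assumes "c \<in> cells [Suc m1, Suc m2] - {(1, 1), (1, 2)}" "1 \<le> m2"
  shows "shift_cell c \<in> cells [m1, m2] - {(1, 1)}"
  using assms by (cases c) (auto simp: cells_two_rows shift_cell_def)

lemma set_unshift_subset_cells:
  assumes "set v \<subseteq> cells [m1, m2] - {(1, 1)}" "1 \<le> m2"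
  shows "set (unshift k v) \<subseteq> cells [Suc m1, Suc m2] - {(1, 1), (1, 2)}"
proof
  fix c assume "c \<in> set (unshift k v)"
  then consider "c = (2, 1)" | "c = (2, 2)"
    | c' where "c' \<in> set v" "c' \<noteq> (2, 1)" "c = (fst c', Suc (snd c'))"
    using set_unshift by blast
  then show "c \<in> cells [Suc m1, Suc m2] - {(1, 1), (1, 2)}"
  proof cases
    case 3
    obtain r j where c': "c' = (r, j)" by (cases c')
    have "(r, j) \<in> cells [m1, m2] - {(1, 1)}" using 3 assms(1) c' by auto
    then show ?thesis using 3 c' by (auto simp: cells_two_rows)
  qed (use assms in \<open>auto simp: cells_two_rows\<close>)
qed

lemma covers_shift_cell:
  assumes "c \<in> cells [m1, m2] - {(1, 1), (1, 2)}" "d \<in> cells [m1, m2] - {(1, 1), (1, 2)}"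
    and "covers c d" "(c, d) \<noteq> ((2, 1), (2, 2))"
  shows "covers (shift_cell c) (shift_cell d)"
  using assms by (cases c; cases d) (auto simp: cells_two_rows covers_def shift_cell_def)

lemma le_if_covers_shift_cell:
  assumes "c \<in> cells [m1, m2] - {(1, 1), (1, 2)}" "d \<in> cells [m1, m2] - {(1, 1), (1, 2)}"
    and "covers (shift_cell c) (shift_cell d)"
  shows "c \<noteq> d \<and> fst c \<le> fst d \<and> snd c \<le> snd d"
  using assms by (cases c; cases d) (auto simp: cells_two_rows covers_def shift_cell_def)

section \<open>Splitting off the first column\<close>

definition density :: "(nat \<Rightarrow> nat) \<Rightarrow> (nat \<Rightarrow> nat) \<Rightarrow> nat \<times> nat \<Rightarrow> nat" where
  "density a b = (\<lambda>(r, j). if r = 1 then a j else if r = 2 then b j else 0)"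

definition reduced_density :: "(nat \<Rightarrow> nat) \<Rightarrow> (nat \<Rightarrow> nat) \<Rightarrow> nat \<Rightarrow> nat \<times> nat \<Rightarrow> nat" where
  "reduced_density a b i = (\<lambda>(r, j). if r = 1 then a (j + 1)
     else if r = 2 then (if j = 1 then b 1 + b 2 - i else b (j + 1)) else 0)"

text \<open>The segment of a word for \<open>density a b\<close> after its \<open>(1, 1)\<close>-block, up to the
  last \<open>(1, 2)\<close>.\<close>
definition head_words :: "nat \<Rightarrow> nat \<Rightarrow> (nat \<times> nat) list set" where
  "head_words m i = {u. length u = m + i \<and> set u \<subseteq> {(1, 2), (2, 1)}
     \<and> count_list u (2, 1) = i \<and> last u = (1, 2)}"

definition join_word ::
  "(nat \<Rightarrow> nat) \<Rightarrow> (nat \<Rightarrow> nat) \<Rightarrow> nat \<times> (nat \<times> nat) list \<times> (nat \<times> nat) list \<Rightarrow> (nat \<times> nat) list" where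
  "join_word a b = (\<lambda>(i, u, w'). replicate (a 1) (1, 1) @ u @ unshift (b 1 - i) (drop (a 2) w'))"

lemma finite_head_words: "finite (head_words m i)"
  by (rule finite_subset[OF _ finite_lists_length_eq[of "{(1, 2), (2, 1)}" "m + i"]])
    (auto simp: head_words_def)

lemma card_head_words:
  assumes "0 < m"
  shows "card (head_words m i) = m + i - 1 choose i"
proof -
  define L where "L = {v. length v = m + i - 1 \<and> set v \<subseteq> {(1::nat, 2::nat), (2, 1)}
    \<and> count_list v (2, 1) = i}"
  have "head_words m i = (\<lambda>v. v @ [(1, 2)]) ` L"
  proof
    show "head_words m i \<subseteq> (\<lambda>v. v @ [(1, 2)]) ` L"
    proof
      fix u assume u: "u \<in> head_words m i"
      then have "u \<noteq> []" using assms unfolding head_words_def by auto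
      then have u_eq: "u = butlast u @ [(1, 2)]"
        using u append_butlast_last_id unfolding head_words_def by fastforce
      have "butlast u \<in> L"
        using u arg_cong[OF u_eq, of "\<lambda>x. count_list x (2, 1)"] in_set_butlastD
        unfolding L_def head_words_def by fastforce
      then show "u \<in> (\<lambda>v. v @ [(1, 2)]) ` L" using u_eq by blast
    qed
    show "(\<lambda>v. v @ [(1, 2)]) ` L \<subseteq> head_words m i"
      unfolding L_def head_words_def using assms by auto
  qed
  then have "card (head_words m i) = card L" by (simp add: card_image inj_on_def)
  also have "\<dots> = m + i - 1 choose i" unfolding L_def by (rule card_two_letter_words) simp
  finally show ?thesis .
qed

context
  fixes n1 n2 :: nat and a b :: "nat \<Rightarrow> nat"
  assumes le: "n2 \<le> n1" and n2: "2 \<le> n2"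
    and a_pos: "\<forall>j. 1 \<le> j \<and> j \<le> n1 \<longrightarrow> 0 < a j"
    and b_pos: "\<forall>j. 1 \<le> j \<and> j \<le> n2 \<longrightarrow> 0 < b j"
begin

lemma density_pos: "\<forall>c\<in>cells [n1, n2]. 0 < density a b c"
  using a_pos b_pos by (auto simp: density_def cells_two_rows)

lemma reduced_density_pos:
  assumes "i \<le> b 1"
  shows "\<forall>c\<in>cells [n1 - 1, n2 - 1]. 0 < reduced_density a b i c"
proof -
  have "0 < b 2" using b_pos n2 by simp
  then show ?thesis using assms a_pos b_pos by (auto simp: reduced_density_def cells_two_rows)
qed

lemma reduced_word_split:
  assumes i: "i \<le> b 1" and w': "w' \<in> tableau_words [n1 - 1, n2 - 1] (reduced_density a b i)"
  shows "w' = replicate (a 2) (1, 1) @ drop (a 2) w'"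
    and "set (drop (a 2) w') \<subseteq> cells [n1 - 1, n2 - 1] - {(1, 1)}"
    and "count_list (drop (a 2) w') (2, 1) = b 1 + b 2 - i"
proof -
  have "reduced_density a b i (1, 1) = a 2" by (simp add: reduced_density_def numeral_2_eq_2)
  then have first: "w' = replicate (a 2) (1, 1) @ drop (a 2) w'" "(1, 1) \<notin> set (drop (a 2) w')"
    using tableau_word_first_block[OF w' reduced_density_pos[OF i]] le n2 by auto
  then show "w' = replicate (a 2) (1, 1) @ drop (a 2) w'" by simp
  have "set w' \<subseteq> cells [n1 - 1, n2 - 1]" using w' unfolding tableau_words_def by auto
  then show "set (drop (a 2) w') \<subseteq> cells [n1 - 1, n2 - 1] - {(1, 1)}"
    using first(2) set_drop_subset by fastforce
  have "(2, 1) \<in> cells [n1 - 1, n2 - 1]" using le n2 by (auto simp: cells_two_rows)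
  then have "count_list w' (2, 1) = b 1 + b 2 - i"
    using w' unfolding tableau_words_def by (auto simp: reduced_density_def)
  then show "count_list (drop (a 2) w') (2, 1) = b 1 + b 2 - i"
    using arg_cong[OF first(1), of "\<lambda>x. count_list x (2, 1)"] by simp
qed

lemma unshifted_tail:
  assumes i: "i \<le> b 1" and w': "w' \<in> tableau_words [n1 - 1, n2 - 1] (reduced_density a b i)"
  defines "v \<equiv> unshift (b 1 - i) (drop (a 2) w')"
  shows "map shift_cell v = drop (a 2) w'"
    and "count_list v (2, 1) = b 1 - i"
    and "before (2, 1) (2, 2) v"
    and "set v \<subseteq> cells [n1, n2] - {(1, 1), (1, 2)}"
proof -
  note split = reduced_word_split[OF i w']
  have snd_pos: "\<forall>c\<in>set (drop (a 2) w'). 1 \<le> snd c"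
    using split(2) by (auto simp: cells_two_rows)
  show "map shift_cell v = drop (a 2) w'" unfolding v_def by (rule map_shift_cell_unshift[OF snd_pos])
  show "count_list v (2, 1) = b 1 - i" unfolding v_def using count_list_unshift[OF snd_pos] split(3) by simp
  show "before (2, 1) (2, 2) v" unfolding v_def by (rule before_unshift[OF snd_pos])
  have "Suc (n1 - 1) = n1" "Suc (n2 - 1) = n2" "1 \<le> n2 - 1" using le n2 by auto
  then show "set v \<subseteq> cells [n1, n2] - {(1, 1), (1, 2)}"
    unfolding v_def using set_unshift_subset_cells[OF split(2)] by metis
qed

lemma count_list_unshifted_tail:
  assumes i: "i \<le> b 1" and w': "w' \<in> tableau_words [n1 - 1, n2 - 1] (reduced_density a b i)"
    and c: "c \<in> cells [n1, n2] - {(1, 1), (1, 2), (2, 1)}"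
  shows "count_list (unshift (b 1 - i) (drop (a 2) w')) c = density a b c"
proof -
  define v' where "v' = drop (a 2) w'"
  define v where "v = unshift (b 1 - i) v'"
  note split = reduced_word_split[OF i w', folded v'_def]
  note tail = unshifted_tail[OF i w', folded v'_def, folded v_def]
  have v_cells: "\<forall>c\<in>set v. c = (2, 1) \<or> 2 \<le> snd c" using tail(4) cells_not_first_two by blast
  have count_v': "count_list v' c = count_list w' c" if "c \<noteq> (1, 1)" for c
    using arg_cong[OF split(1), of "\<lambda>x. count_list x c"] that by (simp add: count_list_replicate)
  show ?thesis
  proof (cases "c = (2, 2)")
    case True
    have "count_list v' (2, 1) = count_list v (2, 1) + count_list v (2, 2)"
      using count_list_map_shift_cell[OF v_cells, of "(2, 1)"] tail(1) by simp
    then show ?thesis using True split(3) tail(2) i unfolding v_def v'_def by (simp add: density_def)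
  next
    case False
    obtain r j where c_eq: "c = (r, j)" by (cases c)
    have j: "2 \<le> j" and r: "r = 1 \<or> r = 2" using c False c_eq by (auto simp: cells_two_rows)
    have "count_list v' (r, j - 1) = count_list v c"
      using count_list_map_shift_cell[OF v_cells, of "(r, j - 1)"] tail(1) c False c_eq j by auto
    moreover have "(r, j - 1) \<in> cells [n1 - 1, n2 - 1]" using c c_eq j by (auto simp: cells_two_rows)
    then have "count_list w' (r, j - 1) = reduced_density a b i (r, j - 1)"
      using w' unfolding tableau_words_def by blast
    moreover have "(r, j - 1) \<noteq> (1, 1)" using c c_eq j by auto
    ultimately have "count_list v c = reduced_density a b i (r, j - 1)" using count_v' by simp
    then show ?thesis
      using c False c_eq j r unfolding v_def v'_def by (auto simp: reduced_density_def density_def)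
  qed
qed

lemma before_unshifted_tail:
  assumes i: "i \<le> b 1" and w': "w' \<in> tableau_words [n1 - 1, n2 - 1] (reduced_density a b i)"
    and covers: "covers c d"
  shows "before c d (unshift (b 1 - i) (drop (a 2) w'))"
proof -
  define v' where "v' = drop (a 2) w'"
  define v where "v = unshift (b 1 - i) v'"
  note split = reduced_word_split[OF i w', folded v'_def]
  note tail = unshifted_tail[OF i w', folded v'_def, folded v_def]
  have "before c d v"
  proof (cases "c \<in> set v \<and> d \<in> set v \<and> (c, d) \<noteq> ((2, 1), (2, 2))")
    case True
    then have "c \<in> cells [n1, n2] - {(1, 1), (1, 2)}" "d \<in> cells [n1, n2] - {(1, 1), (1, 2)}"
      using tail(4) by auto
    then have "covers (shift_cell c) (shift_cell d)"
      using covers_shift_cell[OF _ _ covers] True by blast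
    then have "before (shift_cell c) (shift_cell d) w'" by (rule before_if_covers[OF w'])
    then have "before (shift_cell c) (shift_cell d) (map shift_cell v)"
      using split(1) tail(1) before_append by metis
    then show ?thesis by (rule before_map)
  next
    case False
    then consider "c \<notin> set v" | "d \<notin> set v" | "c = (2, 1)" "d = (2, 2)" by auto
    then show ?thesis using tail(3) by cases (simp_all add: before_if_notin_left before_if_notin_right)
  qed
  then show ?thesis unfolding v_def v'_def .
qed

lemma count_list_join_word:
  assumes i: "i \<le> b 1" and u: "u \<in> head_words (a 2) i"
    and w': "w' \<in> tableau_words [n1 - 1, n2 - 1] (reduced_density a b i)"
    and c: "c \<in> cells [n1, n2]"
  shows "count_list (join_word a b (i, u, w')) c = density a b c"
proof -
  define v where "v = unshift (b 1 - i) (drop (a 2) w')"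
  note tail = unshifted_tail[OF i w', folded v_def]
  have u_set: "set u \<subseteq> {(1, 2), (2, 1)}" and u_21: "count_list u (2, 1) = i"
    and "length u = a 2 + i"
    using u unfolding head_words_def by auto
  then have u_12: "count_list u (1, 2) = a 2" using count_list_two_letters[OF u_set] by simp
  have count: "count_list (join_word a b (i, u, w')) c
      = count_list (replicate (a 1) (1, 1)) c + count_list u c + count_list v c"
    unfolding join_word_def v_def by simp
  consider "c = (1, 1)" | "c = (1, 2)" | "c = (2, 1)" | "c \<notin> {(1, 1), (1, 2), (2, 1)}" by blast
  then show ?thesis
  proof cases
    case 1
    then have "count_list u c = 0" "count_list v c = 0" using u_set tail(4) by (auto intro: count_notin)
    then show ?thesis using count 1 by (simp add: density_def count_list_replicate)
  next
    case 2
    then have "count_list v c = 0" using tail(4) by (auto intro: count_notin)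
    then show ?thesis using count 2 u_12 by (simp add: density_def)
  next
    case 3
    then show ?thesis using count u_21 tail(2) i by (simp add: density_def)
  next
    case 4
    then have "count_list u c = 0" "count_list (replicate (a 1) (1, 1)) c = 0"
      using u_set by (auto intro: count_notin)
    then show ?thesis using count count_list_unshifted_tail[OF i w'] c 4 unfolding v_def by simp
  qed
qed

lemma before_join_word:
  assumes i: "i \<le> b 1" and u: "u \<in> head_words (a 2) i"
    and w': "w' \<in> tableau_words [n1 - 1, n2 - 1] (reduced_density a b i)"
    and covers: "covers c d"
  shows "before c d (join_word a b (i, u, w'))"
proof -
  define v where "v = unshift (b 1 - i) (drop (a 2) w')"
  note tail = unshifted_tail[OF i w', folded v_def]
  have u_set: "set u \<subseteq> {(1, 2), (2, 1)}" using u unfolding head_words_def by auto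
  have "c \<noteq> d" using covers by (auto simp: covers_def)
  have "before c d u"
  proof (cases "c \<in> set u \<and> d \<in> set u")
    case True
    then have "c \<in> {(1, 2), (2, 1)}" "d \<in> {(1, 2), (2, 1)}" using u_set by auto
    then show ?thesis using covers by (auto simp: covers_def)
  qed (metis before_if_notin_left before_if_notin_right)
  moreover have "c \<notin> set v" if "d \<in> set u"
  proof -
    have "c = (1, 1) \<or> c \<notin> cells [n1, n2]"
      using that u_set covers by (cases c) (auto simp: covers_def cells_two_rows)
    then show ?thesis using tail(4) by auto
  qed
  moreover have "c \<notin> set (u @ v)" if "d = (1, 1)"
  proof -
    have "c \<notin> cells [n1, n2]" using that covers by (cases c) (auto simp: covers_def cells_two_rows)
    moreover have "(1, 2) \<in> cells [n1, n2]" "(2, 1) \<in> cells [n1, n2]"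
      using le n2 by (auto simp: cells_two_rows)
    ultimately show ?thesis using u_set tail(4) by auto
  qed
  ultimately show ?thesis
    using before_replicate[OF \<open>c \<noteq> d\<close>] before_unshifted_tail[OF i w' covers]
    unfolding join_word_def v_def by (auto simp: before_append)
qed

lemma join_word_in_tableau_words:
  assumes "i \<le> b 1" and "u \<in> head_words (a 2) i"
    and w': "w' \<in> tableau_words [n1 - 1, n2 - 1] (reduced_density a b i)"
  shows "join_word a b (i, u, w') \<in> tableau_words [n1, n2] (density a b)"
proof -
  have "set u \<subseteq> {(1, 2), (2, 1)}" using assms(2) unfolding head_words_def by auto
  moreover have "(1, 1) \<in> cells [n1, n2]" "(1, 2) \<in> cells [n1, n2]" "(2, 1) \<in> cells [n1, n2]"
    using le n2 by (auto simp: cells_two_rows)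
  ultimately have "set (join_word a b (i, u, w')) \<subseteq> cells [n1, n2]"
    using unshifted_tail(4)[OF assms(1) w'] unfolding join_word_def by auto
  then show ?thesis
    unfolding tableau_words_def
    using count_list_join_word[OF assms] before_join_word[OF assms] by blast
qed

lemma inj_on_join_word:
  "inj_on (join_word a b)
    (SIGMA i:{0..b 1}. head_words (a 2) i \<times> tableau_words [n1 - 1, n2 - 1] (reduced_density a b i))"
proof (rule inj_onI)
  fix x y
  assume "x \<in> (SIGMA i:{0..b 1}. head_words (a 2) i \<times> tableau_words [n1 - 1, n2 - 1] (reduced_density a b i))"
    and "y \<in> (SIGMA i:{0..b 1}. head_words (a 2) i \<times> tableau_words [n1 - 1, n2 - 1] (reduced_density a b i))"
    and eq: "join_word a b x = join_word a b y"
  then obtain i u w' i' u' w'' where xy: "x = (i, u, w')" "y = (i', u', w'')"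
    and i: "i \<le> b 1" "i' \<le> b 1" and u: "u \<in> head_words (a 2) i" "u' \<in> head_words (a 2) i'"
    and w': "w' \<in> tableau_words [n1 - 1, n2 - 1] (reduced_density a b i)"
      "w'' \<in> tableau_words [n1 - 1, n2 - 1] (reduced_density a b i')"
    by auto
  define v where "v = unshift (b 1 - i) (drop (a 2) w')"
  define v' where "v' = unshift (b 1 - i') (drop (a 2) w'')"
  note tail = unshifted_tail[OF i(1) w'(1), folded v_def]
  note tail' = unshifted_tail[OF i(2) w'(2), folded v'_def]
  have "0 < a 2" using a_pos le n2 by auto
  then have nonempty: "u \<noteq> []" "u' \<noteq> []" and last: "last u = (1, 2)" "last u' = (1, 2)"
    using u unfolding head_words_def by auto
  have uv: "u @ v = u' @ v'" using eq unfolding xy join_word_def v_def v'_def by simp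
  have "(1, 2) \<notin> set v" "(1, 2) \<notin> set v'" using tail(4) tail'(4) by auto
  then have "u = u'" using append_eq_append_last_unique[OF uv nonempty last] by blast
  moreover from this have "v = v'" using uv by simp
  moreover have "i = i'" using u \<open>u = u'\<close> unfolding head_words_def by simp
  moreover have "drop (a 2) w' = drop (a 2) w''" using tail(1) tail'(1) \<open>v = v'\<close> by metis
  then have "w' = w''"
    using reduced_word_split(1)[OF i(1) w'(1)] reduced_word_split(1)[OF i(2) w'(2)] by metis
  ultimately show "x = y" using xy by simp
qed

lemma tableau_word_decomposition:
  assumes w: "w \<in> tableau_words [n1, n2] (density a b)"
  obtains i u v where "w = replicate (a 1) (1, 1) @ u @ v" "i \<le> b 1" "u \<in> head_words (a 2) i"
    "set v \<subseteq> cells [n1, n2] - {(1, 1), (1, 2)}" "count_list v (2, 1) = b 1 - i"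
proof -
  have cells: "(1, 2) \<in> cells [n1, n2]" "(2, 1) \<in> cells [n1, n2]" using le n2 by (auto simp: cells_two_rows)
  have w_cells: "set w \<subseteq> cells [n1, n2]" using w unfolding tableau_words_def by blast
  define rest where "rest = drop (a 1) w"
  have "density a b (1, 1) = a 1" by (simp add: density_def)
  then have first: "w = replicate (a 1) (1, 1) @ rest" "(1, 1) \<notin> set rest"
    using tableau_word_first_block[OF w density_pos] le n2 unfolding rest_def by auto
  have "(1, 2) \<in> set w" using cell_in_tableau_word[OF w cells(1)] density_pos cells(1) by simp
  then have "(1, 2) \<in> set rest" using first(1) by auto
  then obtain ys zs where rest: "rest = ys @ (1, 2) # zs" and "(1, 2) \<notin> set zs"
    using split_list_last by metis
  define u where "u = ys @ [(1, 2)]"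
  have w_eq: "w = replicate (a 1) (1, 1) @ u @ zs" using first(1) rest unfolding u_def by simp
  \<comment> \<open>every other cell lies weakly right of and below \<open>(1, 2)\<close>, so it cannot precede it\<close>
  have u_set: "set u \<subseteq> {(1, 2), (2, 1)}"
  proof
    fix d assume "d \<in> set u"
    show "d \<in> {(1, 2), (2, 1)}"
    proof (rule ccontr)
      assume d: "d \<notin> {(1, 2), (2, 1)}"
      then have "d \<in> set ys" using \<open>d \<in> set u\<close> unfolding u_def by auto
      then have "d \<in> cells [n1, n2] - {(1, 1)}" using w_cells first rest by auto
      then have "before (1, 2) d w"
        using d before_if_le_two_rows[OF w density_pos cells(1)] by (cases d) (auto simp: cells_two_rows)
      moreover have "w = (replicate (a 1) (1, 1) @ ys) @ (1, 2) # zs" using first(1) rest by simp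
      ultimately show False using \<open>d \<in> set ys\<close> by (auto simp: before_append)
    qed
  qed
  define i where "i = count_list u (2, 1)"
  have "count_list w (2, 1) = b 1" "count_list w (1, 2) = a 2"
    using w cells unfolding tableau_words_def by (auto simp: density_def)
  then have "count_list zs (2, 1) = b 1 - i" "i \<le> b 1" "count_list u (1, 2) = a 2"
    using \<open>(1, 2) \<notin> set zs\<close> unfolding w_eq i_def by (auto simp: count_list_replicate)
  moreover have "u \<in> head_words (a 2) i"
    using count_list_two_letters[OF u_set] \<open>count_list u (1, 2) = a 2\<close> u_set
    unfolding head_words_def i_def u_def by simp
  moreover have "set zs \<subseteq> cells [n1, n2] - {(1, 1), (1, 2)}"
    using w_cells first rest \<open>(1, 2) \<notin> set zs\<close> by auto
  ultimately show ?thesis using that w_eq by blast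
qed

lemma count_list_collapsed_word:
  assumes w: "w \<in> tableau_words [n1, n2] (density a b)"
    and w_eq: "w = replicate (a 1) (1, 1) @ u @ v" and i: "i \<le> b 1" and u: "u \<in> head_words (a 2) i"
    and v: "set v \<subseteq> cells [n1, n2] - {(1, 1), (1, 2)}" "count_list v (2, 1) = b 1 - i"
    and c: "c \<in> cells [n1 - 1, n2 - 1]"
  shows "count_list (replicate (a 2) (1, 1) @ map shift_cell v) c = reduced_density a b i c"
proof -
  have u_set: "set u \<subseteq> {(1, 2), (2, 1)}" using u unfolding head_words_def by auto
  have count_v: "count_list v d = density a b d" if "d \<in> cells [n1, n2] - {(1, 1), (1, 2), (2, 1)}" for d
  proof -
    have "count_list w d = density a b d" using w that unfolding tableau_words_def by blast
    moreover have "count_list u d = 0" using u_set that by (auto intro: count_notin)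
    ultimately show ?thesis using that unfolding w_eq by (auto simp: count_list_replicate)
  qed
  obtain r j where c_eq: "c = (r, j)" by (cases c)
  have j: "1 \<le> j" using c c_eq by (simp add: cells_two_rows)
  have "\<forall>c\<in>set v. c = (2, 1) \<or> 2 \<le> snd c" using v(1) cells_not_first_two by blast
  then have count_map: "count_list (map shift_cell v) c
      = (if c = (2, 1) then count_list v (2, 1) + count_list v (2, 2) else count_list v (r, Suc j))"
    using count_list_map_shift_cell[of v c] c_eq j by auto
  consider "c = (1, 1)" | "c = (2, 1)" | "c \<noteq> (1, 1)" "c \<noteq> (2, 1)" by blast
  then show ?thesis
  proof cases
    case 1
    have "count_list v (1, 2) = 0" using v(1) by (auto intro: count_notin)
    then show ?thesis
      using count_map 1 c_eq by (simp add: count_list_replicate reduced_density_def numeral_2_eq_2)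
  next
    case 2
    have "(2, 2) \<in> cells [n1, n2]" using le n2 by (simp add: cells_two_rows)
    then have "count_list v (2, 2) = b 2" using count_v by (simp add: density_def)
    then show ?thesis using count_map 2 v(2) i by (simp add: count_list_replicate reduced_density_def)
  next
    case 3
    have "(r, Suc j) \<in> cells [n1, n2] - {(1, 1), (1, 2), (2, 1)}"
      using c c_eq 3 j by (auto simp: cells_two_rows)
    then show ?thesis using count_map count_v 3 c_eq c
      by (auto simp: count_list_replicate reduced_density_def density_def cells_two_rows)
  qed
qed

lemma collapsed_word_in_tableau_words:
  assumes w: "w \<in> tableau_words [n1, n2] (density a b)"
    and w_eq: "w = replicate (a 1) (1, 1) @ u @ v" and i: "i \<le> b 1" and u: "u \<in> head_words (a 2) i"
    and v: "set v \<subseteq> cells [n1, n2] - {(1, 1), (1, 2)}" "count_list v (2, 1) = b 1 - i"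
  shows "replicate (a 2) (1, 1) @ map shift_cell v \<in> tableau_words [n1 - 1, n2 - 1] (reduced_density a b i)"
proof -
  have n: "Suc (n1 - 1) = n1" "Suc (n2 - 1) = n2" "1 \<le> n2 - 1" using le n2 by auto
  note shift_mem = shift_cell_mem_cells[of _ "n1 - 1" "n2 - 1", unfolded n(1,2), OF _ n(3)]
  have shift_v: "set (map shift_cell v) \<subseteq> cells [n1 - 1, n2 - 1] - {(1, 1)}"
  proof
    fix c' assume "c' \<in> set (map shift_cell v)"
    then obtain c where c: "c \<in> set v" and c': "c' = shift_cell c" by auto
    from v(1) c have "c \<in> cells [n1, n2] - {(1, 1), (1, 2)}" by (rule subsetD)
    then show "c' \<in> cells [n1 - 1, n2 - 1] - {(1, 1)}" unfolding c' by (rule shift_mem)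
  qed
  moreover have "(1, 1) \<in> cells [n1 - 1, n2 - 1]" using le n2 by (simp add: cells_two_rows)
  ultimately have "set (replicate (a 2) (1, 1) @ map shift_cell v) \<subseteq> cells [n1 - 1, n2 - 1]" by auto
  moreover have "before c' d' (replicate (a 2) (1, 1) @ map shift_cell v)" if "covers c' d'" for c' d'
  proof -
    have "before c' d' (map shift_cell v)"
    proof (rule before_map_if_before, intro ballI impI)
      fix c d assume "c \<in> set v" "d \<in> set v" "shift_cell c = c'" "shift_cell d = d'"
      then have "c \<noteq> d \<and> fst c \<le> fst d \<and> snd c \<le> snd d" "c \<in> cells [n1, n2]" "d \<in> cells [n1, n2]"
        using le_if_covers_shift_cell[of c n1 n2 d] v(1) that by auto
      then have "before c d w" using before_if_le_two_rows[OF w density_pos, of "fst c" "snd c" "fst d" "snd d"] by simp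
      then show "before c d v" unfolding w_eq by (simp add: before_append)
    qed
    moreover have "c' \<notin> set (map shift_cell v)" if "d' = (1, 1)"
    proof -
      have "c' \<notin> cells [n1 - 1, n2 - 1]"
        using \<open>covers c' d'\<close> that by (cases c') (auto simp: covers_def cells_two_rows)
      then show ?thesis using shift_v by blast
    qed
    moreover have "c' \<noteq> d'" using \<open>covers c' d'\<close> by (auto simp: covers_def)
    ultimately show ?thesis by (auto simp: before_append before_replicate)
  qed
  ultimately show ?thesis
    unfolding tableau_words_def using count_list_collapsed_word[OF assms] by blast
qed

lemma join_word_surj:
  assumes w: "w \<in> tableau_words [n1, n2] (density a b)"
  shows "w \<in> join_word a b `
    (SIGMA i:{0..b 1}. head_words (a 2) i \<times> tableau_words [n1 - 1, n2 - 1] (reduced_density a b i))"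
proof -
  obtain i u v where w_eq: "w = replicate (a 1) (1, 1) @ u @ v" and i: "i \<le> b 1"
    and u: "u \<in> head_words (a 2) i"
    and v: "set v \<subseteq> cells [n1, n2] - {(1, 1), (1, 2)}" "count_list v (2, 1) = b 1 - i"
    using tableau_word_decomposition[OF w] .
  define w' where "w' = replicate (a 2) (1, 1) @ map shift_cell v"
  have "before (2, 1) (2, 2) v"
    using before_if_covers[OF w, of "(2, 1)" "(2, 2)"] unfolding w_eq by (simp add: covers_def before_append)
  moreover have "\<forall>c\<in>set v. c = (2, 1) \<or> 2 \<le> snd c" using v(1) cells_not_first_two by blast
  ultimately have "unshift (b 1 - i) (map shift_cell v) = v"
    using unshift_map_shift_cell v(2) by metis
  then have "join_word a b (i, u, w') = w" unfolding join_word_def w'_def w_eq by simp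
  moreover have "w' \<in> tableau_words [n1 - 1, n2 - 1] (reduced_density a b i)"
    unfolding w'_def using collapsed_word_in_tableau_words[OF w w_eq i u v] .
  ultimately show ?thesis using i u by force
qed

lemma bij_betw_join_word:
  "bij_betw (join_word a b)
    (SIGMA i:{0..b 1}. head_words (a 2) i \<times> tableau_words [n1 - 1, n2 - 1] (reduced_density a b i))
    (tableau_words [n1, n2] (density a b))"
  unfolding bij_betw_def using inj_on_join_word join_word_in_tableau_words join_word_surj by auto

end

theorem theorem6:
  fixes n1 n2 :: nat and a b :: "nat \<Rightarrow> nat"
  assumes "n1 \<ge> n2" and "n2 \<ge> 2"
    and "\<forall>j. 1 \<le> j \<and> j \<le> n1 \<longrightarrow> a j > 0"
    and "\<forall>j. 1 \<le> j \<and> j \<le> n2 \<longrightarrow> b j > 0"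
  shows "card (SVT [n1, n2] (\<lambda>(r, j). if r = 1 then a j else if r = 2 then b j else 0)) =
    (\<Sum>i = 0..b 1. (a 2 + i - 1 choose i) *
       card (SVT [n1 - 1, n2 - 1]
         (\<lambda>(r, j). if r = 1 then a (j + 1)
                   else if r = 2 then (if j = 1 then b 1 + b 2 - i else b (j + 1))
                   else 0)))"
proof -
  let ?W' = "\<lambda>i. tableau_words [n1 - 1, n2 - 1] (reduced_density a b i)"
  have "0 < a 2" using assms by simp
  have "card (SVT [n1, n2] (density a b)) = card (SIGMA i:{0..b 1}. head_words (a 2) i \<times> ?W' i)"
    using bij_betw_same_card[OF bij_betw_join_word[OF assms]] by (simp add: card_SVT_eq_card_tableau_words)
  also have "\<dots> = (\<Sum>i = 0..b 1. card (head_words (a 2) i) * card (?W' i))"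
    by (simp add: card_SigmaI finite_head_words finite_tableau_words card_cartesian_product)
  also have "\<dots> = (\<Sum>i = 0..b 1. (a 2 + i - 1 choose i) * card (SVT [n1 - 1, n2 - 1] (reduced_density a b i)))"
    using card_head_words[OF \<open>0 < a 2\<close>] by (simp add: card_SVT_eq_card_tableau_words)
  finally show ?thesis unfolding density_def reduced_density_def .
qed

end
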